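(* Let $\mu$ be a probability measure on $[0,\infty)$ with $\mu(\{0\})<1$ and let $\alpha\in(0,1)$. Then $$\frac12\Big(m_\alpha(\mu)-\int_{(0,1)}u^\alpha\,\mu(du)\Big)\le -(1-\alpha)\int_{(0,1]}\frac{K_\mu(-x)}{x^{1+\alpha}}\,dx\le c(\mu)\,\alpha^{-1}m_\alpha(\mu),$$ where $c(\mu)=1/\int_{[0,\infty)}\frac{\mu(du)}{1+u}$. Moreover, $m_\alpha(\mu)<\infty$ if and only if $-\int_{(0,1]}\frac{K_\mu(-x)}{x^{1+\alpha}}\,dx<\infty$.
   Context: For $\alpha\ge0$, $m_\alpha(\mu)=\int_{[0,\infty)}x^\alpha\,\mu(dx)\in[0,\infty]$. Define $\psi_\mu(z)=\int_{[0,\infty)}\frac{z\xi}{1-z\xi}\,\mu(d\xi)$ for $z\in\mathbb C\setminus[0,\infty)$ and $K_\mu(z)=\psi_\mu(z)/(1+\psi_\mu(z))$; note $K_\mu(-x)\le0$ for $x>0$. *)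

theory Defs
  imports "HOL-Probability.Probability"
begin

definition moment :: "real measure \<Rightarrow> real \<Rightarrow> ennreal" where
  "moment M a = (\<integral>\<^sup>+ x. ennreal (x powr a) \<partial>M)"

definition psi :: "real measure \<Rightarrow> complex \<Rightarrow> complex" where
  "psi M z = (\<integral> \<xi>. z * complex_of_real \<xi> / (1 - z * complex_of_real \<xi>) \<partial>M)"

definition Kfun :: "real measure \<Rightarrow> complex \<Rightarrow> complex" where
  "Kfun M z = psi M z / (1 + psi M z)"

definition cmu :: "real measure \<Rightarrow> real" where
  "cmu M = 1 / (\<integral> u. 1 / (1 + u) \<partial>M)"

end

theory Submission
  imports Defs
begin

text \<open>
  Put A(x) = \<integral> x u / (1 + x u) d\<mu>(u), so that \<psi>(-x) = -A(x) and K(-x) = -A(x) / (1 - A(x)).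
  For 0 \<le> x \<le> 1 the denominator 1 - A(x) = \<integral> d\<mu>(u) / (1 + x u) lies between 1/c(\<mu>) and 1,
  hence A(x) \<le> -K(-x) \<le> c(\<mu>) A(x). By Tonelli, the integral of A(x) / x^(1+\<alpha>) over (0,1]
  equals \<integral> G(u) d\<mu>(u), where G(u) is the integral of u x^(-\<alpha>) / (1 + x u) over (0,1].
  Comparing 1 + x u with 2 for x \<le> 1/u and with x u for x \<ge> 1/u gives
  u^\<alpha> / (2(1 - \<alpha>)) \<le> G(u) for u \<ge> 1 and G(u) \<le> u^\<alpha> / (\<alpha>(1 - \<alpha>)) for all u \<ge> 0.
\<close>

lemma nn_integral_powr_from_0:
  assumes "p > -1" "c \<ge> 0"
  shows "(\<integral>\<^sup>+x. ennreal (x powr p) * indicator {0..c} x \<partial>lborel) = ennreal (c powr (p + 1) / (p + 1))"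
  by (rule nn_integral_has_integral_lebesgue') (use has_integral_powr_from_0[OF assms] in auto)

lemma nn_integral_powr_to_inf:
  assumes "e < -1" "c > 0"
  shows "(\<integral>\<^sup>+x. ennreal (x powr e) * indicator {c..} x \<partial>lborel) = ennreal (- (c powr (e + 1)) / (e + 1))"
  by (rule nn_integral_has_integral_lebesgue') (use has_integral_powr_to_inf[OF assms] in auto)

text \<open>The integrand of G, written so that integrating it in u gives A(x) / x^(1+a).\<close>
definition moment_kernel :: "real \<Rightarrow> real \<Rightarrow> real \<Rightarrow> real" where
  "moment_kernel a x u = indicator {0<..1} x * (x * u / (1 + x * u)) / x powr (1 + a)"

lemma moment_kernel_eq:
  assumes "0 < x" "x \<le> 1" "u \<ge> 0"
  shows "moment_kernel a x u = u * x powr (-a) / (1 + x * u)"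
proof -
  have "x powr (1 + a) = x * x powr a" using assms by (simp add: powr_add)
  moreover have "x powr (-a) = 1 / x powr a" by (simp add: powr_minus divide_inverse)
  ultimately show ?thesis using assms by (simp add: moment_kernel_def)
qed

lemma borel_measurable_nn_integral_moment_kernel:
  "(\<lambda>u. \<integral>\<^sup>+x. ennreal (moment_kernel a x u) \<partial>lborel) \<in> borel_measurable borel"
  by (rule lborel.borel_measurable_nn_integral) (simp add: moment_kernel_def)

lemma moment_kernel_lower:
  assumes "0 < x" "x * u \<le> 1" "u \<ge> 1"
  shows "u / 2 * x powr (-a) \<le> moment_kernel a x u"
proof -
  have "x \<le> 1" using assms by (metis mult.right_neutral mult_left_mono order.trans less_imp_le)
  have "u * x powr (-a) / 2 \<le> u * x powr (-a) / (1 + x * u)"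
    using assms by (intro divide_left_mono) (auto intro: add_pos_nonneg)
  then show ?thesis using assms \<open>x \<le> 1\<close> by (simp add: moment_kernel_eq)
qed

lemma moment_kernel_upper:
  assumes "u > 0"
  shows "moment_kernel a x u \<le> u * x powr (-a) * indicator {0..1/u} x + x powr (-1 - a) * indicator {1/u..} x"
proof (cases "0 < x \<and> x \<le> 1")
  case True
  show ?thesis
  proof (cases "x \<le> 1 / u")
    case True2: True
    have "u * x powr (-a) / (1 + x * u) \<le> u * x powr (-a) / 1"
      using True assms by (intro divide_left_mono) (auto intro: add_pos_nonneg)
    then show ?thesis using True True2 assms
      by (auto simp: moment_kernel_eq indicator_def intro!: add_increasing2)
  next
    case False
    then have "x * u > 1" using assms by (simp add: field_simps)
    have "u * x powr (-a) / (1 + x * u) \<le> u * x powr (-a) / (x * u)"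
      using True assms \<open>x * u > 1\<close> by (intro divide_left_mono) auto
    also have "\<dots> = x powr (-1 - a)"
      using True assms by (simp add: powr_diff powr_minus field_simps)
    finally show ?thesis using True False assms by (simp add: moment_kernel_eq indicator_def)
  qed
next
  case False
  then show ?thesis using assms by (auto simp: moment_kernel_def indicator_def)
qed

lemma nn_integral_moment_kernel_lower:
  assumes "u \<ge> 1" "0 < a" "a < 1"
  shows "ennreal (u powr a / (2 * (1 - a))) \<le> (\<integral>\<^sup>+x. ennreal (moment_kernel a x u) \<partial>lborel)"
proof -
  have "u * (1 / u) powr (1 - a) = u powr a"
    using assms by (simp add: powr_divide powr_diff)
  then have "ennreal (u powr a / (2 * (1 - a))) = ennreal (u / 2) * ennreal ((1 / u) powr (- a + 1) / (- a + 1))"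
    using assms by (simp add: ennreal_mult'[symmetric] field_simps)
  also have "\<dots> = (\<integral>\<^sup>+x. ennreal (u / 2) * (ennreal (x powr (-a)) * indicator {0..1/u} x) \<partial>lborel)"
    using assms by (simp add: nn_integral_cmult nn_integral_powr_from_0)
  also have "\<dots> \<le> (\<integral>\<^sup>+x. ennreal (moment_kernel a x u) \<partial>lborel)"
  proof (intro nn_integral_mono)
    fix x
    show "ennreal (u / 2) * (ennreal (x powr (-a)) * indicator {0..1/u} x) \<le> ennreal (moment_kernel a x u)"
    proof (cases "0 < x \<and> x \<le> 1 / u")
      case True
      then have "x * u \<le> 1" using assms by (simp add: field_simps)
      then show ?thesis using True assms moment_kernel_lower[of x u a]
        by (simp add: ennreal_mult'[symmetric] indicator_def ennreal_leI)
    qed (auto simp: indicator_def)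
  qed
  finally show ?thesis .
qed

lemma nn_integral_moment_kernel_upper:
  assumes "u \<ge> 0" "0 < a" "a < 1"
  shows "(\<integral>\<^sup>+x. ennreal (moment_kernel a x u) \<partial>lborel) \<le> ennreal (u powr a / (a * (1 - a)))"
proof (cases "u = 0")
  case True
  then show ?thesis by (simp add: moment_kernel_def)
next
  case False
  with assms have u: "u > 0" by simp
  have "(\<integral>\<^sup>+x. ennreal (moment_kernel a x u) \<partial>lborel)
      \<le> (\<integral>\<^sup>+x. ennreal (u * x powr (-a) * indicator {0..1/u} x + x powr (-1 - a) * indicator {1/u..} x) \<partial>lborel)"
    using moment_kernel_upper[OF u] by (intro nn_integral_mono ennreal_leI)
  also have "\<dots> = (\<integral>\<^sup>+x. ennreal u * (ennreal (x powr (-a)) * indicator {0..1/u} x)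
            + ennreal (x powr (-1 - a)) * indicator {1/u..} x \<partial>lborel)"
    using u by (intro nn_integral_cong) (auto simp: indicator_def ennreal_mult)
  also have "\<dots> = ennreal u * ennreal ((1/u) powr (1 - a) / (1 - a)) + ennreal ((1/u) powr (- a) / a)"
    using assms u by (subst nn_integral_add) (auto simp: nn_integral_cmult nn_integral_powr_from_0 nn_integral_powr_to_inf)
  also have "\<dots> = ennreal (u powr a / (a * (1 - a)))"
  proof -
    have "u * (1 / u) powr (1 - a) = u powr a" "(1 / u) powr (- a) = u powr a"
      using u by (simp_all add: powr_divide powr_diff powr_minus_divide)
    then show ?thesis using assms u
      by (simp add: ennreal_mult'[symmetric] ennreal_plus[symmetric] field_simps del: ennreal_plus)
  qed
  finally show ?thesis .
qed

locale nonneg_real_prob_space = prob_space M for M :: "real measure" +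
  assumes sets_eq_borel: "sets M = sets borel"
    and measure_neg: "measure M {..<0} = 0"
begin

lemma borel_measurable_M: "f \<in> borel_measurable borel \<Longrightarrow> f \<in> borel_measurable M"
  unfolding measurable_cong_sets[OF sets_eq_borel refl] .

lemma AE_nonneg: "AE u in M. 0 \<le> u"
proof (rule AE_I')
  have "{..<0::real} \<in> events" using sets_eq_borel by simp
  then show "{..<0::real} \<in> null_sets M"
    using measure_neg by (simp add: null_sets_def emeasure_eq_measure)
qed auto

lemma integrable_unit_bounded:
  fixes f :: "real \<Rightarrow> real"
  assumes "f \<in> borel_measurable borel" "\<And>u. 0 \<le> u \<Longrightarrow> \<bar>f u\<bar> \<le> 1"
  shows "integrable M f"
proof (rule Bochner_Integration.integrable_bound[OF integrable_const[of 1]])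
  show "f \<in> borel_measurable M" using assms(1) by (rule borel_measurable_M)
  show "AE u in M. norm (f u) \<le> norm (1::real)"
    using AE_nonneg by eventually_elim (use assms(2) in auto)
qed

definition negpsi :: "real \<Rightarrow> real" where
  "negpsi x = (\<integral>u. x * u / (1 + x * u) \<partial>M)"

lemma integrable_negpsi: "0 \<le> x \<Longrightarrow> integrable M (\<lambda>u. x * u / (1 + x * u))"
  by (rule integrable_unit_bounded) (auto simp: divide_le_eq_1 add_pos_nonneg)

lemma integrable_inverse_one_plus: "0 \<le> x \<Longrightarrow> integrable M (\<lambda>u. 1 / (1 + x * u))"
  by (rule integrable_unit_bounded) (auto simp: divide_le_eq_1)

lemma negpsi_nonneg: "0 \<le> x \<Longrightarrow> 0 \<le> negpsi x"
  unfolding negpsi_def by (rule integral_nonneg_AE) (use AE_nonneg in eventually_elim, auto)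

lemma one_minus_negpsi: "0 \<le> x \<Longrightarrow> 1 - negpsi x = (\<integral>u. 1 / (1 + x * u) \<partial>M)"
proof -
  assume x: "0 \<le> x"
  have "(\<integral>u. 1 / (1 + x * u) \<partial>M) = (\<integral>u. 1 - x * u / (1 + x * u) \<partial>M)"
  proof (rule integral_cong_AE)
    show "AE u in M. 1 / (1 + x * u) = 1 - x * u / (1 + x * u)"
      using AE_nonneg
    proof eventually_elim
      case (elim u)
      then have "0 < 1 + x * u" using x by (simp add: add_pos_nonneg)
      then show ?case by (simp add: field_simps)
    qed
  qed (auto intro: borel_measurable_M)
  also have "\<dots> = 1 - negpsi x"
    unfolding negpsi_def using integrable_negpsi[OF x] by (simp add: prob_space)
  finally show ?thesis by simp
qed

lemma cmu_pos: "0 < cmu M"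
proof -
  have int: "integrable M (\<lambda>u. 1 / (1 + u))"
    using integrable_inverse_one_plus[of 1] by simp
  have nonneg: "AE u in M. 0 \<le> 1 / (1 + u)"
    using AE_nonneg by eventually_elim auto
  have "(\<integral>u. 1 / (1 + u) \<partial>M) \<noteq> 0"
  proof
    assume "(\<integral>u. 1 / (1 + u) \<partial>M) = 0"
    then have "AE u in M. 1 / (1 + u) = 0"
      using integral_nonneg_eq_0_iff_AE[OF int nonneg] by simp
    then have "AE u in M. False"
      using AE_nonneg by eventually_elim auto
    then show False by simp
  qed
  moreover have "0 \<le> (\<integral>u. 1 / (1 + u) \<partial>M)"
    by (rule integral_nonneg_AE[OF nonneg])
  ultimately show ?thesis by (simp add: cmu_def)
qed

lemma inverse_cmu_le_one_minus_negpsi: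
  assumes "0 \<le> x" "x \<le> 1"
  shows "1 / cmu M \<le> 1 - negpsi x"
proof -
  have "(\<integral>u. 1 / (1 + u) \<partial>M) \<le> (\<integral>u. 1 / (1 + x * u) \<partial>M)"
  proof (rule integral_mono_AE)
    show "AE u in M. 1 / (1 + u) \<le> 1 / (1 + x * u)"
      using AE_nonneg
    proof eventually_elim
      case (elim u)
      then have "x * u \<le> u" using assms by (simp add: mult_left_le_one_le)
      then show ?case using elim assms by (intro divide_left_mono) (auto intro!: mult_pos_pos add_pos_nonneg)
    qed
  qed (use integrable_inverse_one_plus[of 1] integrable_inverse_one_plus[of x] assms in auto)
  then show ?thesis using one_minus_negpsi assms by (simp add: cmu_def)
qed

lemma Kfun_minus_real: "- Re (Kfun M (- complex_of_real x)) = negpsi x / (1 - negpsi x)"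
proof -
  have "psi M (- complex_of_real x) = (\<integral>u. complex_of_real (- (x * u / (1 + x * u))) \<partial>M)"
    unfolding psi_def by (rule Bochner_Integration.integral_cong) simp_all
  also have "\<dots> = - complex_of_real (negpsi x)"
    unfolding negpsi_def integral_complex_of_real by simp
  finally show ?thesis by (simp add: Kfun_def)
qed

lemma Kfun_minus_real_bounds:
  assumes "0 < x" "x \<le> 1"
  shows "negpsi x \<le> - Re (Kfun M (- complex_of_real x))"
    and "- Re (Kfun M (- complex_of_real x)) \<le> cmu M * negpsi x"
proof -
  have nonneg: "0 \<le> negpsi x" using negpsi_nonneg assms by simp
  have lower: "1 / cmu M \<le> 1 - negpsi x" using inverse_cmu_le_one_minus_negpsi assms by simp
  moreover have "0 < 1 / cmu M" using cmu_pos by simp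
  ultimately have pos: "0 < 1 - negpsi x" by linarith
  have "negpsi x * (1 - negpsi x) \<le> negpsi x"
    using nonneg pos by (intro mult_right_le_one_le) auto
  then show "negpsi x \<le> - Re (Kfun M (- complex_of_real x))"
    using pos by (simp add: Kfun_minus_real le_divide_eq)
  have "negpsi x / (1 - negpsi x) \<le> negpsi x / (1 / cmu M)"
    using nonneg lower cmu_pos pos by (intro divide_left_mono) auto
  then show "- Re (Kfun M (- complex_of_real x)) \<le> cmu M * negpsi x"
    by (simp add: Kfun_minus_real mult.commute)
qed

lemma borel_measurable_pair_M:
  "f \<in> borel_measurable (N \<Otimes>\<^sub>M borel) \<Longrightarrow> f \<in> borel_measurable (N \<Otimes>\<^sub>M M)"
  by (simp add: measurable_cong_sets[OF sets_pair_measure_cong[OF refl sets_eq_borel] refl])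

lemma borel_measurable_negpsi [measurable]: "negpsi \<in> borel_measurable borel"
  unfolding negpsi_def by (rule borel_measurable_lebesgue_integral, rule borel_measurable_pair_M) simp

abbreviation negpsi_integral :: "real \<Rightarrow> ennreal" where
  "negpsi_integral a \<equiv> \<integral>\<^sup>+x. ennreal (indicator {0<..1} x * negpsi x / x powr (1 + a)) \<partial>lborel"

abbreviation Kfun_integral :: "real \<Rightarrow> ennreal" where
  "Kfun_integral a \<equiv>
     \<integral>\<^sup>+x. ennreal (indicator {0<..1} x * (- Re (Kfun M (- complex_of_real x)) / x powr (1 + a))) \<partial>lborel"

lemma nn_integral_moment_kernel_eq_negpsi:
  "(\<integral>\<^sup>+u. ennreal (moment_kernel a x u) \<partial>M) = ennreal (indicator {0<..1} x * negpsi x / x powr (1 + a))"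
proof (cases "x \<in> {0<..1}")
  case True
  define c where "c = 1 / x powr (1 + a)"
  have c: "c > 0" using True by (simp add: c_def)
  have "(\<integral>\<^sup>+u. ennreal (moment_kernel a x u) \<partial>M) = (\<integral>\<^sup>+u. ennreal (x * u / (1 + x * u)) \<partial>M) * ennreal c"
    using True c by (subst nn_integral_multc[symmetric])
      (auto intro!: borel_measurable_M nn_integral_cong simp: moment_kernel_def c_def ennreal_mult''[symmetric])
  also have "(\<integral>\<^sup>+u. ennreal (x * u / (1 + x * u)) \<partial>M) = ennreal (negpsi x)"
    unfolding negpsi_def
  proof (rule nn_integral_eq_integral)
    show "integrable M (\<lambda>u. x * u / (1 + x * u))" using True by (intro integrable_negpsi) simp
    show "AE u in M. 0 \<le> x * u / (1 + x * u)"
      using AE_nonneg by eventually_elim (use True in auto)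
  qed
  finally show ?thesis using True c negpsi_nonneg[of x]
    by (simp add: c_def ennreal_mult''[symmetric] divide_inverse)
qed (simp add: moment_kernel_def)

lemma negpsi_integral_eq_nn_integral_moment_kernel:
  "negpsi_integral a = (\<integral>\<^sup>+u. (\<integral>\<^sup>+x. ennreal (moment_kernel a x u) \<partial>lborel) \<partial>M)"
proof -
  interpret pair_sigma_finite lborel M
    by (simp add: pair_sigma_finite_def lborel.sigma_finite_measure_axioms sigma_finite_measure_axioms)
  have "(\<lambda>(x, u). ennreal (moment_kernel a x u)) \<in> borel_measurable (lborel \<Otimes>\<^sub>M M)"
    by (rule borel_measurable_pair_M) (simp add: moment_kernel_def)
  then show ?thesis
    by (simp add: nn_integral_moment_kernel_eq_negpsi[symmetric] Fubini')
qed

lemma negpsi_integral_le_Kfun_integral: "negpsi_integral a \<le> Kfun_integral a"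
proof (intro nn_integral_mono ennreal_leI)
  fix x :: real
  show "indicator {0<..1} x * negpsi x / x powr (1 + a)
      \<le> indicator {0<..1} x * (- Re (Kfun M (- complex_of_real x)) / x powr (1 + a))"
  proof (cases "x \<in> {0<..1}")
    case True
    then have "negpsi x / x powr (1 + a) \<le> - Re (Kfun M (- complex_of_real x)) / x powr (1 + a)"
      using Kfun_minus_real_bounds(1)[of x] by (intro divide_right_mono) auto
    then show ?thesis using True by simp
  qed simp
qed

lemma Kfun_integral_le_negpsi_integral: "Kfun_integral a \<le> ennreal (cmu M) * negpsi_integral a"
proof -
  have "Kfun_integral a \<le> (\<integral>\<^sup>+x. ennreal (cmu M) * ennreal (indicator {0<..1} x * negpsi x / x powr (1 + a)) \<partial>lborel)"
  proof (intro nn_integral_mono)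
    fix x :: real
    show "ennreal (indicator {0<..1} x * (- Re (Kfun M (- complex_of_real x)) / x powr (1 + a)))
      \<le> ennreal (cmu M) * ennreal (indicator {0<..1} x * negpsi x / x powr (1 + a))"
    proof (cases "x \<in> {0<..1}")
      case True
      then have "- Re (Kfun M (- complex_of_real x)) / x powr (1 + a) \<le> cmu M * negpsi x / x powr (1 + a)"
        using Kfun_minus_real_bounds(2)[of x] by (intro divide_right_mono) auto
      then show ?thesis using True cmu_pos negpsi_nonneg[of x] by (simp add: ennreal_mult'[symmetric])
    qed simp
  qed
  also have "\<dots> = ennreal (cmu M) * negpsi_integral a"
    by (rule nn_integral_cmult) simp
  finally show ?thesis .
qed

lemma tail_moment_le_negpsi_integral:
  assumes "0 < a" "a < 1"
  shows "(\<integral>\<^sup>+u. ennreal (indicator {1..} u * u powr a) \<partial>M) \<le> ennreal (2 * (1 - a)) * negpsi_integral a"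
proof -
  have "(\<integral>\<^sup>+u. ennreal (indicator {1..} u * u powr a) \<partial>M)
      \<le> (\<integral>\<^sup>+u. ennreal (2 * (1 - a)) * (\<integral>\<^sup>+x. ennreal (moment_kernel a x u) \<partial>lborel) \<partial>M)"
  proof (intro nn_integral_mono)
    fix u :: real
    show "ennreal (indicator {1..} u * u powr a) \<le> ennreal (2 * (1 - a)) * (\<integral>\<^sup>+x. ennreal (moment_kernel a x u) \<partial>lborel)"
    proof (cases "1 \<le> u")
      case True
      have "ennreal (u powr a) = ennreal (2 * (1 - a)) * ennreal (u powr a / (2 * (1 - a)))"
        using assms by (simp add: ennreal_mult[symmetric])
      also have "\<dots> \<le> ennreal (2 * (1 - a)) * (\<integral>\<^sup>+x. ennreal (moment_kernel a x u) \<partial>lborel)"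
        using nn_integral_moment_kernel_lower[OF True assms] by (rule mult_left_mono) simp
      finally show ?thesis using True by simp
    qed simp
  qed
  also have "\<dots> = ennreal (2 * (1 - a)) * negpsi_integral a"
    by (subst nn_integral_cmult)
      (simp_all add: negpsi_integral_eq_nn_integral_moment_kernel
        borel_measurable_M borel_measurable_nn_integral_moment_kernel)
  finally show ?thesis .
qed

lemma negpsi_integral_le_moment:
  assumes "0 < a" "a < 1"
  shows "negpsi_integral a \<le> ennreal (1 / (a * (1 - a))) * moment M a"
proof -
  have "negpsi_integral a \<le> (\<integral>\<^sup>+u. ennreal (1 / (a * (1 - a))) * ennreal (u powr a) \<partial>M)"
    unfolding negpsi_integral_eq_nn_integral_moment_kernel
  proof (rule nn_integral_mono_AE)
    show "AE u in M. (\<integral>\<^sup>+x. ennreal (moment_kernel a x u) \<partial>lborel) \<le> ennreal (1 / (a * (1 - a))) * ennreal (u powr a)"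
      using AE_nonneg
    proof eventually_elim
      case (elim u)
      then show ?case
        using nn_integral_moment_kernel_upper[OF elim assms] assms by (simp add: ennreal_mult[symmetric])
    qed
  qed
  also have "\<dots> = ennreal (1 / (a * (1 - a))) * moment M a"
    unfolding moment_def by (rule nn_integral_cmult) (simp add: borel_measurable_M)
  finally show ?thesis .
qed

lemma low_moment_finite:
  assumes "0 \<le> a"
  shows "(\<integral>\<^sup>+u. ennreal (indicator {0<..<1} u * u powr a) \<partial>M) < \<infinity>"
proof -
  have "(\<integral>\<^sup>+u. ennreal (indicator {0<..<1} u * u powr a) \<partial>M) \<le> (\<integral>\<^sup>+u. 1 \<partial>M)"
    using assms by (intro nn_integral_mono) (auto simp: indicator_def powr_le1)
  then show ?thesis by (simp add: emeasure_space_1 order_le_less_trans)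
qed

lemma moment_split:
  "moment M a = (\<integral>\<^sup>+u. ennreal (indicator {0<..<1} u * u powr a) \<partial>M)
      + (\<integral>\<^sup>+u. ennreal (indicator {1..} u * u powr a) \<partial>M)"
proof -
  have "moment M a = (\<integral>\<^sup>+u. ennreal (indicator {0<..<1} u * u powr a) + ennreal (indicator {1..} u * u powr a) \<partial>M)"
    unfolding moment_def
  proof (rule nn_integral_cong_AE)
    show "AE u in M. ennreal (u powr a) = ennreal (indicator {0<..<1} u * u powr a) + ennreal (indicator {1..} u * u powr a)"
      using AE_nonneg by eventually_elim (auto simp: indicator_def)
  qed
  then show ?thesis by (simp add: nn_integral_add borel_measurable_M)
qed

lemma half_tail_moment_le_Kfun_integral:
  assumes "0 < a" "a < 1"
  shows "ennreal (1 / 2) * (moment M a - (\<integral>\<^sup>+u. ennreal (indicator {0<..<1} u * u powr a) \<partial>M))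
      \<le> ennreal (1 - a) * Kfun_integral a"
proof -
  have "moment M a - (\<integral>\<^sup>+u. ennreal (indicator {0<..<1} u * u powr a) \<partial>M)
      = (\<integral>\<^sup>+u. ennreal (indicator {1..} u * u powr a) \<partial>M)"
    using moment_split[of a] low_moment_finite[of a] assms by simp
  then have "ennreal (1 / 2) * (moment M a - (\<integral>\<^sup>+u. ennreal (indicator {0<..<1} u * u powr a) \<partial>M))
      \<le> ennreal (1 / 2) * (ennreal (2 * (1 - a)) * negpsi_integral a)"
    using tail_moment_le_negpsi_integral[OF assms] by (simp add: mult_left_mono)
  also have "\<dots> = ennreal (1 - a) * negpsi_integral a"
  proof -
    have "ennreal (1 / 2) * ennreal (2 * (1 - a)) = ennreal (1 - a)"
      using assms by (subst ennreal_mult[symmetric]) auto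
    then show ?thesis by (simp only: mult.assoc[symmetric])
  qed
  also have "\<dots> \<le> ennreal (1 - a) * Kfun_integral a"
    using negpsi_integral_le_Kfun_integral by (rule mult_left_mono) simp
  finally show ?thesis .
qed

lemma Kfun_integral_le_moment:
  assumes "0 < a" "a < 1"
  shows "ennreal (1 - a) * Kfun_integral a \<le> ennreal (cmu M / a) * moment M a"
proof -
  have "ennreal (1 - a) * Kfun_integral a \<le> ennreal (1 - a) * (ennreal (cmu M) * negpsi_integral a)"
    by (intro mult_left_mono Kfun_integral_le_negpsi_integral) simp
  also have "\<dots> \<le> ennreal (1 - a) * (ennreal (cmu M) * (ennreal (1 / (a * (1 - a))) * moment M a))"
    using negpsi_integral_le_moment[OF assms] by (intro mult_left_mono) auto
  also have "\<dots> = ennreal (cmu M / a) * moment M a"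
    using assms cmu_pos by (simp add: mult.assoc[symmetric] ennreal_mult[symmetric])
  finally show ?thesis .
qed

end

theorem proposition4p2:
  fixes M :: "real measure" and \<alpha> :: real
  assumes "prob_space M" and "sets M = sets borel"
    and "measure M {..<0} = 0"
    and "measure M {0} < 1"
    and "0 < \<alpha>" and "\<alpha> < 1"
  shows "(ennreal (1/2) * (moment M \<alpha> - (\<integral>\<^sup>+ u. ennreal (indicator {0<..<1} u * u powr \<alpha>) \<partial>M))
           \<le> ennreal (1 - \<alpha>) * (\<integral>\<^sup>+ x. ennreal (indicator {0<..1} x * (- Re (Kfun M (- complex_of_real x)) / x powr (1 + \<alpha>))) \<partial>lborel)) \<and>
         (ennreal (1 - \<alpha>) * (\<integral>\<^sup>+ x. ennreal (indicator {0<..1} x * (- Re (Kfun M (- complex_of_real x)) / x powr (1 + \<alpha>))) \<partial>lborel)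
           \<le> ennreal (cmu M / \<alpha>) * moment M \<alpha>) \<and>
         (moment M \<alpha> < \<infinity> \<longleftrightarrow>
           (\<integral>\<^sup>+ x. ennreal (indicator {0<..1} x * (- Re (Kfun M (- complex_of_real x)) / x powr (1 + \<alpha>))) \<partial>lborel) < \<infinity>)"
proof -
  interpret nonneg_real_prob_space M
    using assms(1-3) by (simp add: nonneg_real_prob_space_def nonneg_real_prob_space_axioms_def)
  have a: "0 < \<alpha>" "\<alpha> < 1" by fact+
  note lower = half_tail_moment_le_Kfun_integral[OF a]
  note upper = Kfun_integral_le_moment[OF a]
  have "moment M \<alpha> < \<infinity> \<longleftrightarrow> Kfun_integral \<alpha> < \<infinity>"
  proof
    assume "moment M \<alpha> < \<infinity>"
    then have "ennreal (cmu M / \<alpha>) * moment M \<alpha> < \<infinity>"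
      by (simp add: ennreal_mult_less_top)
    with upper have "ennreal (1 - \<alpha>) * Kfun_integral \<alpha> < \<infinity>"
      by (rule le_less_trans)
    then show "Kfun_integral \<alpha> < \<infinity>"
      using a by (auto simp: ennreal_mult_less_top)
  next
    assume "Kfun_integral \<alpha> < \<infinity>"
    then have "ennreal (1 - \<alpha>) * Kfun_integral \<alpha> < \<infinity>"
      by (simp add: ennreal_mult_less_top)
    with lower have "ennreal (1 / 2) * (moment M \<alpha> - (\<integral>\<^sup>+u. ennreal (indicator {0<..<1} u * u powr \<alpha>) \<partial>M)) < \<infinity>"
      by (rule le_less_trans)
    then show "moment M \<alpha> < \<infinity>"
      using moment_split[of \<alpha>] low_moment_finite[of \<alpha>] a by (auto simp: ennreal_mult_less_top)
  qed
  with lower upper show ?thesis by blast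
qed

end
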